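(* If a Banach space $Z$ admits a coarse embedding into $L_2$, then $Z$ (with its norm metric) is $\Lambda$-nontrivial.
   Context: A map $f:Z\to L_2$ is a coarse embedding if there are non-decreasing $\alpha,\beta:[0,\infty)\to[0,\infty)$ with $\beta(t)\to\infty$ and $\beta(\|x-y\|)\le\|f(x)-f(y)\|_2\le\alpha(\|x-y\|)$ for all $x,y$. A map $f:X\to L_2$ is $\tau$-thresholding if $d(x,y)\ge\tau$ implies $\|f(x)-f(y)\|_2\ge\tau$. Define $\Lambda_\tau(X,\varepsilon)=\inf\big\{\sup_{x,y\in X,\ d(x,y)\ge\varepsilon\tau}\frac{\varepsilon\|f(x)-f(y)\|_2}{d(x,y)}: f:X\to L_2\text{ is }\tau\text{-thresholding}\big\}$ and $\Lambda(X,\varepsilon)=\sup_{\tau>0}\Lambda_\tau(X,\varepsilon)$. $(X,d)$ is $\Lambda$-nontrivial if $\liminf_{\varepsilon\to0}\Lambda(X,\varepsilon)=0$. *)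

theory Defs
  imports "HOL-Analysis.Analysis"
begin

text \<open>L_2 is modelled concretely as the sequence space of square-summable real
sequences (isometrically isomorphic to L_2[0,1]).\<close>

definition L2 :: "(nat \<Rightarrow> real) set" where
  "L2 = {x. summable (\<lambda>n. (x n)\<^sup>2)}"

definition L2_dist :: "(nat \<Rightarrow> real) \<Rightarrow> (nat \<Rightarrow> real) \<Rightarrow> real" where
  "L2_dist x y = sqrt (\<Sum>n. (x n - y n)\<^sup>2)"

definition coarse_embedding_L2 :: "('a::real_normed_vector \<Rightarrow> (nat \<Rightarrow> real)) \<Rightarrow> bool" where
  "coarse_embedding_L2 f \<longleftrightarrow> (\<forall>x. f x \<in> L2) \<and>
     (\<exists>\<alpha> \<beta> :: real \<Rightarrow> real.
        mono_on {0..} \<alpha> \<and> mono_on {0..} \<beta> \<and>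
        (\<forall>t\<ge>0. \<alpha> t \<ge> 0 \<and> \<beta> t \<ge> 0) \<and>
        filterlim \<beta> at_top at_top \<and>
        (\<forall>x y. \<beta> (norm (x - y)) \<le> L2_dist (f x) (f y) \<and>
               L2_dist (f x) (f y) \<le> \<alpha> (norm (x - y))))"

definition thresholding :: "real \<Rightarrow> 'a::metric_space set \<Rightarrow> ('a \<Rightarrow> (nat \<Rightarrow> real)) \<Rightarrow> bool" where
  "thresholding \<tau> X f \<longleftrightarrow> (\<forall>x\<in>X. f x \<in> L2) \<and>
     (\<forall>x\<in>X. \<forall>y\<in>X. dist x y \<ge> \<tau> \<longrightarrow> L2_dist (f x) (f y) \<ge> \<tau>)"

text \<open>Lambda_tau(X, eps); values in the extended reals (sup may be infinite,
inf over an empty family is +infinity; the sup over an empty set of pairs is taken as 0).\<close>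
definition Lambda_tau :: "'a::metric_space set \<Rightarrow> real \<Rightarrow> real \<Rightarrow> ereal" where
  "Lambda_tau X \<tau> \<epsilon> =
     (INF f\<in>{f. thresholding \<tau> X f}.
        Sup (insert 0 {ereal (\<epsilon> * L2_dist (f x) (f y) / dist x y) | x y.
                        x \<in> X \<and> y \<in> X \<and> dist x y \<ge> \<epsilon> * \<tau>}))"

definition Lambda :: "'a::metric_space set \<Rightarrow> real \<Rightarrow> ereal" where
  "Lambda X \<epsilon> = (SUP \<tau>\<in>{0<..}. Lambda_tau X \<tau> \<epsilon>)"

definition Lambda_nontrivial :: "'a::metric_space set \<Rightarrow> bool" where
  "Lambda_nontrivial X \<longleftrightarrow> Liminf (at_right 0) (\<lambda>\<epsilon>. Lambda X \<epsilon>) = 0"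

end

theory Submission imports Defs "HOL-Real_Asymp.Real_Asymp" begin

(* A coarse embedding f : Z \<rightarrow> L_2 of a normed space satisfies
   (i)  an affine upper bound  \<parallel>f x - f y\<parallel> \<le> a (\<parallel>x - y\<parallel> + 1), obtained by chaining
        unit steps along the segment from x to y (Z is a normed space), and
   (ii) a lower bound  \<parallel>f x - f y\<parallel> \<ge> \<beta> R  whenever \<parallel>x - y\<parallel> \<ge> R, with \<beta> R \<rightarrow> \<infinity>.
   For a scale \<tau> > 0 the rescaled map  x \<mapsto> (\<tau> / \<beta> R) f ((R / \<tau>) x)  is \<tau>-thresholding,
   and its ratios \<epsilon> \<parallel>g x - g y\<parallel> / d(x,y) over pairs with d(x,y) \<ge> \<epsilon> \<tau> are bounded
   by a (\<epsilon> R + 1) / \<beta> R, independently of \<tau>.  Choosing R = 1/\<surd>\<epsilon> this bound tends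
   to 0 as \<epsilon> \<rightarrow> 0+, so \<Lambda>(Z, \<epsilon>) \<rightarrow> 0 and in particular its liminf is 0.
   The file first develops the metric of the sequence model of L_2 (triangle
   inequality, scaling), then (i), then the estimate on \<Lambda>, and finally the limit. *)

lemma L2_diff_summable:
  assumes "x \<in> L2" "y \<in> L2"
  shows "summable (\<lambda>n. (x n - y n)\<^sup>2)"
proof (rule summable_comparison_test)
  show "summable (\<lambda>n. 2 * (x n)\<^sup>2 + 2 * (y n)\<^sup>2)"
    using assms unfolding L2_def by (intro summable_add summable_mult) auto
  have "(x n - y n)\<^sup>2 \<le> 2 * (x n)\<^sup>2 + 2 * (y n)\<^sup>2" for n
    using zero_le_power2[of "x n + y n"] by (simp add: power2_eq_square algebra_simps)
  then show "\<exists>N. \<forall>n\<ge>N. norm ((x n - y n)\<^sup>2) \<le> 2 * (x n)\<^sup>2 + 2 * (y n)\<^sup>2"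
    by simp
qed

lemma L2_dist_nonneg: "x \<in> L2 \<Longrightarrow> y \<in> L2 \<Longrightarrow> 0 \<le> L2_dist x y"
  unfolding L2_dist_def by (intro real_sqrt_ge_zero suminf_nonneg L2_diff_summable) auto

lemma L2_partial_le:
  assumes "x \<in> L2" "y \<in> L2"
  shows "L2_set (\<lambda>n. x n - y n) {..<N} \<le> L2_dist x y"
  unfolding L2_set_def L2_dist_def
  by (intro real_sqrt_le_mono sum_le_suminf L2_diff_summable assms) auto

text \<open>Triangle inequality, obtained from the finite-dimensional one on every
  truncation and passage to the limit.\<close>
lemma L2_dist_triangle:
  assumes "x \<in> L2" "y \<in> L2" "z \<in> L2"
  shows "L2_dist x z \<le> L2_dist x y + L2_dist y z"
proof -
  define B where "B = L2_dist x y + L2_dist y z"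
  have B0: "0 \<le> B" unfolding B_def using assms L2_dist_nonneg by (meson add_nonneg_nonneg)
  have "(\<Sum>n<N. (x n - z n)\<^sup>2) \<le> B\<^sup>2" for N
  proof -
    have "L2_set (\<lambda>n. (x n - y n) + (y n - z n)) {..<N}
            \<le> L2_set (\<lambda>n. x n - y n) {..<N} + L2_set (\<lambda>n. y n - z n) {..<N}"
      by (rule L2_set_triangle_ineq)
    also have "\<dots> \<le> B" unfolding B_def using L2_partial_le assms by (meson add_mono)
    finally have "sqrt (\<Sum>n<N. (x n - z n)\<^sup>2) \<le> B" unfolding L2_set_def by simp
    moreover have "0 \<le> (\<Sum>n<N. (x n - z n)\<^sup>2)" by (intro sum_nonneg) auto
    ultimately show ?thesis by (metis real_sqrt_le_iff real_sqrt_pow2 sqrt_le_D)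
  qed
  then have "(\<Sum>n. (x n - z n)\<^sup>2) \<le> B\<^sup>2"
    by (intro suminf_le_const L2_diff_summable assms)
  then have "L2_dist x z \<le> sqrt (B\<^sup>2)" unfolding L2_dist_def by (rule real_sqrt_le_mono)
  then show ?thesis using B0 unfolding B_def by simp
qed

lemma L2_scale: "x \<in> L2 \<Longrightarrow> (\<lambda>n. c * x n) \<in> L2"
  unfolding L2_def by (auto simp: power_mult_distrib intro: summable_mult)

lemma L2_dist_scale:
  assumes "x \<in> L2" "y \<in> L2"
  shows "L2_dist (\<lambda>n. c * x n) (\<lambda>n. c * y n) = \<bar>c\<bar> * L2_dist x y"
proof -
  have "(\<Sum>n. (c * x n - c * y n)\<^sup>2) = (\<Sum>n. c\<^sup>2 * (x n - y n)\<^sup>2)"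
    by (simp add: power_mult_distrib right_diff_distrib[symmetric])
  also have "\<dots> = c\<^sup>2 * (\<Sum>n. (x n - y n)\<^sup>2)"
    by (rule suminf_mult) (rule L2_diff_summable[OF assms])
  finally show ?thesis unfolding L2_dist_def by (simp add: real_sqrt_mult)
qed

text \<open>A map on a normed space that moves points at distance \<le> 1 by at most a
  is large-scale Lipschitz: split the segment from x to y into \<lceil>\<parallel>x - y\<parallel>\<rceil>
  steps of length \<le> 1 and use the triangle inequality.\<close>
lemma unit_steps_imp_affine_bound:
  fixes f :: "'a::real_normed_vector \<Rightarrow> (nat \<Rightarrow> real)"
  assumes L: "\<And>x. f x \<in> L2"
    and S: "\<And>x y. norm (x - y) \<le> 1 \<Longrightarrow> L2_dist (f x) (f y) \<le> a"
  shows "L2_dist (f x) (f y) \<le> a * (norm (x - y) + 1)"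
proof -
  have a0: "0 \<le> a" using S[of x x] by (simp add: L2_dist_def)
  define d where "d = norm (x - y)"
  show ?thesis
  proof (cases "d = 0")
    case True
    then show ?thesis using a0 by (simp add: d_def L2_dist_def)
  next
    case False
    then have dpos: "d > 0" unfolding d_def by simp
    define n where "n = nat \<lceil>d\<rceil>"
    have nd: "real n \<ge> d" "real n < d + 1" unfolding n_def using dpos by linarith+
    then have npos: "real n > 0" using dpos by linarith
    define p where "p k = x + (real k / real n) *\<^sub>R (y - x)" for k
    have step: "norm (p k - p (Suc k)) \<le> 1" for k
    proof -
      have "p k - p (Suc k) = - ((1 / real n) *\<^sub>R (y - x))"
        unfolding p_def using npos by (simp add: algebra_simps add_divide_distrib scaleR_left_distrib)
      then have "norm (p k - p (Suc k)) = d / real n"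
        unfolding d_def using npos by (simp add: norm_minus_commute)
      then show ?thesis using nd npos by simp
    qed
    have chain: "L2_dist (f x) (f (p k)) \<le> real k * a" for k
    proof (induction k)
      case 0
      then show ?case by (simp add: p_def L2_dist_def)
    next
      case (Suc k)
      have "L2_dist (f x) (f (p (Suc k))) \<le> L2_dist (f x) (f (p k)) + L2_dist (f (p k)) (f (p (Suc k)))"
        by (intro L2_dist_triangle L)
      also have "\<dots> \<le> real k * a + a" using Suc S[OF step] by (meson add_mono)
      finally show ?case by (simp add: algebra_simps)
    qed
    have "p n = y" unfolding p_def using npos by simp
    then have "L2_dist (f x) (f y) \<le> real n * a" using chain[of n] by simp
    also have "\<dots> \<le> (d + 1) * a" using nd a0 by (intro mult_right_mono) auto
    finally show ?thesis unfolding d_def by (simp add: mult.commute)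
  qed
qed

lemma Lambda_nonneg: "0 \<le> Lambda (UNIV :: 'a::metric_space set) \<epsilon>"
proof -
  have "0 \<le> Lambda_tau (UNIV :: 'a set) 1 \<epsilon>"
    unfolding Lambda_tau_def by (intro INF_greatest Sup_upper) auto
  also have "\<dots> \<le> Lambda (UNIV :: 'a set) \<epsilon>"
    unfolding Lambda_def by (intro SUP_upper) auto
  finally show ?thesis .
qed

lemma Lambda_tau_le:
  assumes thr: "thresholding \<tau> X g" and c0: "0 \<le> c"
    and ratio: "\<And>x y. x \<in> X \<Longrightarrow> y \<in> X \<Longrightarrow> \<epsilon> * \<tau> \<le> dist x y \<Longrightarrow>
                       \<epsilon> * L2_dist (g x) (g y) / dist x y \<le> c"
  shows "Lambda_tau X \<tau> \<epsilon> \<le> ereal c"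
  unfolding Lambda_tau_def
proof (rule INF_lower2)
  show "g \<in> {f. thresholding \<tau> X f}" using thr by simp
  show "Sup (insert 0 {ereal (\<epsilon> * L2_dist (g x) (g y) / dist x y) | x y.
                 x \<in> X \<and> y \<in> X \<and> \<epsilon> * \<tau> \<le> dist x y}) \<le> ereal c"
    using c0 ratio by (intro Sup_least) auto
qed

lemma rescaled_ratio_bound:
  fixes a b d D R \<tau> \<epsilon> :: real
  assumes "a \<ge> 0" "b > 0" "R > 0" "\<tau> > 0" "\<epsilon> > 0" "d \<ge> \<epsilon> * \<tau>"
    and "D \<le> a * ((R / \<tau>) * d + 1)"
  shows "\<epsilon> * ((\<tau> / b) * D) / d \<le> a * (\<epsilon> * R + 1) / b"
proof -
  have dpos: "d > 0" using assms by (smt (verit) mult_pos_pos)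
  have "\<epsilon> * ((\<tau> / b) * D) / d \<le> \<epsilon> * ((\<tau> / b) * (a * ((R / \<tau>) * d + 1))) / d"
    using assms dpos by (intro divide_right_mono mult_left_mono) auto
  also have "\<dots> = (a / b) * (\<epsilon> * R + \<epsilon> * \<tau> / d)"
    using assms dpos by (simp add: field_simps)
  also have "\<dots> \<le> (a / b) * (\<epsilon> * R + 1)"
    using assms dpos by (intro mult_left_mono add_left_mono) (auto simp: field_simps)
  finally show ?thesis by simp
qed

text \<open>For each scale \<tau> the
  witness is the rescaled map x \<mapsto> (\<tau> / b) f ((R / \<tau>) x).\<close>
lemma Lambda_le_compression_bound:
  fixes f :: "'a::real_normed_vector \<Rightarrow> (nat \<Rightarrow> real)"
  assumes L: "\<And>x. f x \<in> L2"
    and Lip: "\<And>x y. L2_dist (f x) (f y) \<le> a * (norm (x - y) + 1)"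
    and a0: "0 \<le> a" and b0: "b > 0" and R0: "R > 0" and e0: "\<epsilon> > 0"
    and Bd: "\<And>x y. R \<le> norm (x - y) \<Longrightarrow> b \<le> L2_dist (f x) (f y)"
  shows "Lambda (UNIV :: 'a set) \<epsilon> \<le> ereal (a * (\<epsilon> * R + 1) / b)"
  unfolding Lambda_def
proof (rule SUP_least)
  fix \<tau> :: real assume "\<tau> \<in> {0<..}"
  then have t0: "\<tau> > 0" by simp
  define s where "s = R / \<tau>"
  define g where "g x = (\<lambda>n. (\<tau> / b) * f (s *\<^sub>R x) n)" for x
  have gd: "L2_dist (g x) (g y) = (\<tau> / b) * L2_dist (f (s *\<^sub>R x)) (f (s *\<^sub>R y))" for x y
    unfolding g_def L2_dist_scale[OF L L] using t0 b0 by simp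
  have nrm: "norm (s *\<^sub>R x - s *\<^sub>R y) = s * dist x y" for x y
    using t0 R0 by (simp add: s_def dist_norm scaleR_diff_right[symmetric])
  have thr: "thresholding \<tau> UNIV g"
    unfolding thresholding_def
  proof (intro conjI ballI impI)
    fix x y :: 'a assume "\<tau> \<le> dist x y"
    then have "R \<le> s * dist x y" using t0 R0 by (simp add: s_def field_simps)
    then have "b \<le> L2_dist (f (s *\<^sub>R x)) (f (s *\<^sub>R y))" using Bd nrm by metis
    then have "(\<tau> / b) * b \<le> L2_dist (g x) (g y)" unfolding gd using t0 b0
      by (intro mult_left_mono) auto
    then show "\<tau> \<le> L2_dist (g x) (g y)" using b0 by simp
  qed (unfold g_def, rule L2_scale[OF L])
  show "Lambda_tau (UNIV :: 'a set) \<tau> \<epsilon> \<le> ereal (a * (\<epsilon> * R + 1) / b)"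
  proof (rule Lambda_tau_le[OF thr])
    show "0 \<le> a * (\<epsilon> * R + 1) / b" using a0 b0 e0 R0 by simp
    fix x y :: 'a assume "\<epsilon> * \<tau> \<le> dist x y"
    moreover have "L2_dist (f (s *\<^sub>R x)) (f (s *\<^sub>R y)) \<le> a * (s * dist x y + 1)"
      using Lip nrm by metis
    ultimately show "\<epsilon> * L2_dist (g x) (g y) / dist x y \<le> a * (\<epsilon> * R + 1) / b"
      unfolding gd s_def using rescaled_ratio_bound a0 b0 R0 t0 e0 by blast
  qed
qed

lemma Lambda_tendsto_zero:
  fixes f :: "'a::real_normed_vector \<Rightarrow> (nat \<Rightarrow> real)"
  assumes L: "\<And>x. f x \<in> L2"
    and Lip: "\<And>x y. L2_dist (f x) (f y) \<le> a * (norm (x - y) + 1)" and a0: "0 \<le> a"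
    and mb: "mono_on {0..} \<beta>" and lim: "filterlim \<beta> at_top at_top"
    and lower: "\<And>x y. \<beta> (norm (x - y)) \<le> L2_dist (f x) (f y)"
  shows "((\<lambda>\<epsilon>. Lambda (UNIV :: 'a set) \<epsilon>) \<longlongrightarrow> 0) (at_right 0)"
proof -
  define R where "R \<epsilon> = 1 / sqrt \<epsilon>" for \<epsilon> :: real
  define h where "h \<epsilon> = a * (\<epsilon> * R \<epsilon> + 1) / \<beta> (R \<epsilon>)" for \<epsilon>
  have blim: "filterlim (\<lambda>\<epsilon>. \<beta> (R \<epsilon>)) at_top (at_right 0)"
    by (rule filterlim_compose[OF lim]) (unfold R_def, real_asymp)
  have "eventually (\<lambda>\<epsilon>. \<beta> (R \<epsilon>) > 0 \<and> \<epsilon> > 0) (at_right 0)"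
    using blim by (simp add: filterlim_at_top_dense eventually_conj eventually_at_right_less)
  then have ev: "eventually (\<lambda>\<epsilon>. Lambda (UNIV :: 'a set) \<epsilon> \<le> ereal (h \<epsilon>)) (at_right 0)"
  proof eventually_elim
    case (elim \<epsilon>)
    then have R0: "R \<epsilon> > 0" unfolding R_def by simp
    have "\<beta> (R \<epsilon>) \<le> L2_dist (f x) (f y)" if "R \<epsilon> \<le> norm (x - y)" for x y
      using mono_onD[OF mb _ _ that] R0 lower[of x y] by auto
    then show ?case
      unfolding h_def using Lambda_le_compression_bound[OF L Lip a0 _ R0] elim by blast
  qed
  have "((\<lambda>\<epsilon>. a * (\<epsilon> * R \<epsilon> + 1)) \<longlongrightarrow> a * (0 + 1)) (at_right 0)"
    unfolding R_def by (intro tendsto_intros) real_asymp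
  from tendsto_mult[OF this tendsto_inverse_0_at_top[OF blim]]
  have "(h \<longlongrightarrow> 0) (at_right 0)" unfolding h_def divide_inverse by simp
  then have "((\<lambda>\<epsilon>. ereal (h \<epsilon>)) \<longlongrightarrow> 0) (at_right 0)"
    using tendsto_ereal[of h 0] by (simp add: zero_ereal_def)
  then show ?thesis
    by (intro tendsto_sandwich[OF _ ev tendsto_const]) (simp_all add: Lambda_nonneg)
qed

theorem lemma5p6:
  fixes f :: "'a::banach \<Rightarrow> (nat \<Rightarrow> real)"
  assumes "coarse_embedding_L2 f"
  shows "Lambda_nontrivial (UNIV :: 'a set)"
proof -
  obtain \<alpha> \<beta> :: "real \<Rightarrow> real" where L: "\<And>x. f x \<in> L2"
    and ma: "mono_on {0..} \<alpha>" and mb: "mono_on {0..} \<beta>"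
    and pos: "\<And>t. t \<ge> 0 \<Longrightarrow> \<alpha> t \<ge> 0 \<and> \<beta> t \<ge> 0"
    and lim: "filterlim \<beta> at_top at_top"
    and bd: "\<And>x y. \<beta> (norm (x - y)) \<le> L2_dist (f x) (f y) \<and> L2_dist (f x) (f y) \<le> \<alpha> (norm (x - y))"
    using assms unfolding coarse_embedding_L2_def by blast
  have lip: "L2_dist (f x) (f y) \<le> \<alpha> 1 * (norm (x - y) + 1)" for x y
  proof (rule unit_steps_imp_affine_bound[OF L])
    fix x y :: 'a assume "norm (x - y) \<le> 1"
    then have "\<alpha> (norm (x - y)) \<le> \<alpha> 1" using ma by (auto intro: mono_onD)
    then show "L2_dist (f x) (f y) \<le> \<alpha> 1" using bd[of x y] by linarith
  qed
  have "0 \<le> \<alpha> 1" using pos[of 1] by simp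
  from Lambda_tendsto_zero[OF L lip this mb lim] bd
  have "((\<lambda>\<epsilon>. Lambda (UNIV :: 'a set) \<epsilon>) \<longlongrightarrow> 0) (at_right 0)" by blast
  then show ?thesis unfolding Lambda_nontrivial_def by (intro lim_imp_Liminf) auto
qed

end
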